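(* Let $n\ge 2$ and let $V'=\{v_1<\dots<v_{n-1}\}$ be a set of $n-1$ positive integers with $\kappa(V')\ge\frac1n$. If $v_n$ is an integer with $v_n\ge n\,v_{n-1}$, then $V=V'\cup\{v_n\}$ satisfies $\kappa(V)\ge\frac{1}{n+1}$.
   Context: For $x\in\mathbb{R}$, $\|x\|=\min\{x-\lfloor x\rfloor,\lceil x\rceil-x\}$ denotes the distance from $x$ to the nearest integer. For a finite nonempty set $V$ of positive integers, $\kappa(V)=\sup_{t\in(0,1)}\min_{v\in V}\|tv\|$. *)

theory Defs
  imports "HOL-Analysis.Analysis"
begin

definition dist_nint :: "real \<Rightarrow> real" where
  "dist_nint x = min (x - of_int \<lfloor>x\<rfloor>) (of_int \<lceil>x\<rceil> - x)"

definition kappa :: "int set \<Rightarrow> real" where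
  "kappa V = (SUP t\<in>{0<..<1::real}. Min ((\<lambda>v. dist_nint (t * of_int v)) ` V))"

end

theory Submission
  imports Defs
begin

text \<open>Take \<open>t\<^sub>0\<close> almost optimal for \<open>V'\<close>, so every \<open>t\<^sub>0 v\<close> with \<open>v \<in> V'\<close> is
  almost \<open>1/n\<close> away from the integers. Moving \<open>t\<close> within \<open>r = 1/(n(n+1) max V')\<close> of \<open>t\<^sub>0\<close>
  changes each \<open>t v\<close> by at most \<open>1/n - 1/(n+1)\<close>, so these stay almost \<open>1/(n+1)\<close> away from
  the integers; meanwhile \<open>t v\<^sub>n\<close> sweeps an interval of length \<open>2 r v\<^sub>n \<ge> 2/(n+1)\<close>, which
  contains a point at distance \<open>1/(n+1)\<close> from the integers.\<close>

lemma dist_nint_nonneg: "0 \<le> dist_nint x"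
  unfolding dist_nint_def by (simp add: of_int_floor_le le_of_int_ceiling)

lemma dist_nint_le_half: "dist_nint x \<le> 1/2"
proof -
  have "\<lceil>x\<rceil> \<le> \<lfloor>x\<rfloor> + 1" by linarith
  then have "real_of_int \<lceil>x\<rceil> \<le> of_int \<lfloor>x\<rfloor> + 1" by linarith
  then show ?thesis unfolding dist_nint_def by linarith
qed

lemma dist_nint_le_abs_diff: "dist_nint y \<le> \<bar>y - of_int k\<bar>"
proof -
  have "k \<le> \<lfloor>y\<rfloor> \<or> \<lceil>y\<rceil> \<le> k" by linarith
  then show ?thesis
  proof
    assume "k \<le> \<lfloor>y\<rfloor>"
    then have "real_of_int k \<le> y" by linarith
    moreover have "dist_nint y \<le> y - of_int \<lfloor>y\<rfloor>" unfolding dist_nint_def by simp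
    ultimately show ?thesis using \<open>k \<le> \<lfloor>y\<rfloor>\<close> by linarith
  next
    assume "\<lceil>y\<rceil> \<le> k"
    then have "y \<le> real_of_int k" by linarith
    moreover have "dist_nint y \<le> of_int \<lceil>y\<rceil> - y" unfolding dist_nint_def by simp
    ultimately show ?thesis using \<open>\<lceil>y\<rceil> \<le> k\<close> by linarith
  qed
qed

lemma dist_nint_attained: "\<exists>k. dist_nint y = \<bar>y - of_int k\<bar>"
proof -
  have "dist_nint y = \<bar>y - of_int \<lfloor>y\<rfloor>\<bar> \<or> dist_nint y = \<bar>y - of_int \<lceil>y\<rceil>\<bar>"
    unfolding dist_nint_def
    using of_int_floor_le[of y] le_of_int_ceiling[of y] by (auto simp: min_def)
  then show ?thesis by blast
qed

lemma dist_nint_le_add_abs_diff: "dist_nint x \<le> dist_nint y + \<bar>x - y\<bar>"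
proof -
  obtain k where "dist_nint y = \<bar>y - of_int k\<bar>" using dist_nint_attained by blast
  moreover have "dist_nint x \<le> \<bar>x - of_int k\<bar>" by (rule dist_nint_le_abs_diff)
  ultimately show ?thesis by linarith
qed

lemma dist_nint_of_int_add:
  assumes "0 < c" "c \<le> 1/2"
  shows "dist_nint (of_int k + c) = c"
proof -
  have "\<lfloor>of_int k + c\<rfloor> = k" using assms by (simp add: floor_unique)
  moreover have "\<lceil>of_int k + c\<rceil> = k + 1" using assms by (intro ceiling_unique) auto
  ultimately show ?thesis using assms unfolding dist_nint_def by simp
qed

lemma exists_dist_nint_ge:
  assumes "0 < c" "c \<le> 1/2"
  shows "\<exists>x. a \<le> x \<and> x \<le> a + 2*c \<and> c \<le> dist_nint x"
proof (cases "c \<le> dist_nint a")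
  case True
  then show ?thesis using assms by (intro exI[of _ a]) auto
next
  case False
  obtain k where "dist_nint a = \<bar>a - of_int k\<bar>" using dist_nint_attained by blast
  with False have "\<bar>a - of_int k\<bar> < c" by simp
  then show ?thesis
    using dist_nint_of_int_add[OF assms, of k] by (intro exI[of _ "of_int k + c"]) auto
qed

lemma bdd_above_Min_dist_nint:
  assumes "finite V" "V \<noteq> {}"
  shows "bdd_above ((\<lambda>t. Min ((\<lambda>v. dist_nint (t * of_int v)) ` V)) ` S)"
proof -
  obtain v where "v \<in> V" using assms(2) by blast
  then have "Min ((\<lambda>v. dist_nint (t * of_int v)) ` V) \<le> 1/2" for t
    using assms(1) dist_nint_le_half by (meson Min_le finite_imageI image_eqI order_trans)
  then show ?thesis by (intro bdd_aboveI2[where M="1/2"]) auto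
qed

lemma le_kappaI:
  assumes "finite V" "V \<noteq> {}" "t \<in> {0<..<1}" "\<forall>v\<in>V. c \<le> dist_nint (t * of_int v)"
  shows "c \<le> kappa V"
proof -
  have "c \<le> Min ((\<lambda>v. dist_nint (t * of_int v)) ` V)"
    using assms by (subst Min_ge_iff) auto
  then show ?thesis unfolding kappa_def
    using assms bdd_above_Min_dist_nint[OF assms(1,2)] by (intro cSUP_upper2) auto
qed

lemma less_kappaD:
  assumes "finite V" "V \<noteq> {}" "y < kappa V"
  obtains t where "t \<in> {0<..<1}" "\<forall>v\<in>V. y < dist_nint (t * of_int v)"
proof -
  have "\<exists>t\<in>{0<..<1::real}. y < Min ((\<lambda>v. dist_nint (t * of_int v)) ` V)"
    using assms(3) unfolding kappa_def
    by (subst (asm) less_cSUP_iff) (use bdd_above_Min_dist_nint[OF assms(1,2)] in auto)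
  then show ?thesis using assms that by (subst (asm) Min_gr_iff) fastforce+
qed

lemma kappa_insert_ge:
  fixes V :: "int set" and w :: int
  assumes V: "finite V" "V \<noteq> {}" "\<forall>v\<in>V. 0 < v"
    and c: "0 < c" "c \<le> 1/2" and r: "0 < r"
    and near: "c + r * of_int (Max V) < kappa V"
    and sweep: "c \<le> r * of_int w"
  shows "c \<le> kappa (insert w V)"
proof -
  define M where "M = Max V"
  have "M \<in> V" using V unfolding M_def by simp
  then have M_pos: "0 < M" using V(3) by blast
  have w_pos: "0 < real_of_int w"
  proof (rule ccontr)
    assume "\<not> 0 < real_of_int w"
    then have "r * of_int w \<le> 0" using r by (simp add: mult_nonneg_nonpos)
    then show False using c sweep by linarith
  qed
  obtain t0 where t0: "t0 \<in> {0<..<1}"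
    and far: "\<forall>v\<in>V. c + r * of_int M < dist_nint (t0 * of_int v)"
    using less_kappaD[OF V(1,2) near] unfolding M_def by blast
  have far_M: "c + r * of_int M < dist_nint (t0 * of_int M)" using far \<open>M \<in> V\<close> by blast
  have "dist_nint (t0 * of_int M) \<le> t0 * of_int M"
    using dist_nint_le_abs_diff[of "t0 * of_int M" 0] t0 M_pos by simp
  then have "r * of_int M < t0 * of_int M" using far_M c by linarith
  then have lo: "0 < t0 - r" using M_pos by (simp add: mult_less_cancel_right)
  have "dist_nint (t0 * of_int M) \<le> of_int M - t0 * of_int M"
    using dist_nint_le_abs_diff[of "t0 * of_int M" M] t0 M_pos by (simp add: mult_left_le_one_le)
  then have "r * of_int M < (1 - t0) * of_int M" using far_M c by (simp add: left_diff_distrib)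
  then have hi: "t0 + r < 1" using M_pos by (simp add: mult_less_cancel_right)
  obtain x where x: "(t0 - r) * of_int w \<le> x" "x \<le> (t0 - r) * of_int w + 2*c"
    and x_far: "c \<le> dist_nint x"
    using exists_dist_nint_ge[OF c] by blast
  define t where "t = x / of_int w"
  have tw: "t * of_int w = x" unfolding t_def using w_pos by simp
  have t_lo: "t0 - r \<le> t" unfolding t_def using x(1) w_pos by (simp add: field_simps)
  have "x \<le> (t0 + r) * of_int w" using x(2) sweep by (simp add: algebra_simps)
  then have t_hi: "t \<le> t0 + r" unfolding t_def using w_pos by (simp add: field_simps)
  have "c \<le> dist_nint (t * of_int v)" if v: "v \<in> V" for v
  proof -
    have v_pos: "0 < real_of_int v" using v V(3) by simp
    have "\<bar>t0 * of_int v - t * of_int v\<bar> = \<bar>t0 - t\<bar> * of_int v"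
      using v_pos by (simp add: abs_mult left_diff_distrib[symmetric])
    also have "\<dots> \<le> r * of_int M"
      using t_lo t_hi v_pos Max_ge[OF V(1) v] r unfolding M_def by (intro mult_mono) auto
    finally show ?thesis
      using dist_nint_le_add_abs_diff[of "t0 * of_int v" "t * of_int v"] far v by fastforce
  qed
  moreover have "t \<in> {0<..<1}" using t_lo t_hi lo hi by auto
  ultimately show ?thesis
    using le_kappaI[of "insert w V" t c] V(1) tw x_far by auto
qed

theorem mainTheorem6:
  fixes n :: nat and V' :: "int set" and vn :: int
  assumes "n \<ge> 2"
    and "finite V'" and "card V' = n - 1"
    and "\<forall>v\<in>V'. v > 0"
    and "kappa V' \<ge> 1 / real n"
    and "vn \<ge> int n * Max V'"
  shows "kappa (insert vn V') \<ge> 1 / (real n + 1)"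
proof (rule dense_le)
  fix c assume c: "c < 1 / (real n + 1)"
  have ne: "V' \<noteq> {}" using assms(1,3) by auto
  show "c \<le> kappa (insert vn V')"
  proof (cases "0 < c")
    case False
    then have "\<forall>v\<in>insert vn V'. c \<le> dist_nint (1/2 * of_int v)"
      using dist_nint_nonneg by (meson not_less order_trans)
    then show ?thesis using le_kappaI[of "insert vn V'" "1/2" c] assms(2) by simp
  next
    case True
    define M where "M = real_of_int (Max V')"
    have M_pos: "0 < M" using assms(2,4) ne unfolding M_def by simp
    define r where "r = 1 / (real n * (real n + 1) * M)"
    have r_pos: "0 < r" using assms(1) M_pos unfolding r_def by simp
    have "r * M = 1 / (real n * (real n + 1))" using M_pos unfolding r_def by simp
    also have "\<dots> = 1 / real n - 1 / (real n + 1)" using assms(1) by (simp add: field_simps)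
    finally have "c + r * M < kappa V'" using c assms(5) by linarith
    moreover have "c \<le> r * of_int vn"
    proof -
      have "1 / (real n + 1) = r * (real n * M)" using assms(1) M_pos unfolding r_def by simp
      also have "\<dots> \<le> r * of_int vn"
        using assms(6) r_pos unfolding M_def
        by (intro mult_left_mono) (metis of_int_le_iff of_int_mult of_int_of_nat_eq, simp)
      finally show ?thesis using c by linarith
    qed
    moreover have "c \<le> 1/2"
    proof -
      have "1 / (real n + 1) \<le> 1/2" using assms(1) by (simp add: field_simps)
      then show ?thesis using c by linarith
    qed
    ultimately show ?thesis
      using kappa_insert_ge[OF assms(2) ne assms(4) True _ r_pos] unfolding M_def by blast
  qed
qed

end
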